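(* Let $A\in\mathbb{Z}^{d\times n}$, $\mathbf{b}\in\mathbb{Z}^d$, $\mathbf{c}\in\mathbb{Z}^n$, $\mathbf{u}\in\mathbb{Z}_{\ge0}^n$. Let $\mathbf{x}_k$ be feasible, let $\alpha\mathbf{s}$ be a steepest-descent augmentation relative to $\mathbf{x}_k$, and let $\mathbf{x}_{k+1}:=\mathbf{x}_k+\alpha\mathbf{s}$. Let $\beta\mathbf{t}$ be a steepest-descent augmentation relative to $\mathbf{x}_{k+1}$. Then $-\mathbf{c}^\top\mathbf{s}/\|\mathbf{s}\|_1\ \ge\ -\mathbf{c}^\top\mathbf{t}/\|\mathbf{t}\|_1$.
   Context: Feasible means $A\mathbf{x}=\mathbf{b}$, $\mathbf{0}\le\mathbf{x}\le\mathbf{u}$, $\mathbf{x}\in\mathbb{Z}^n$. A steepest-descent augmentation relative to a feasible $\mathbf{x}$ is $\alpha\mathbf{s}$ where $\mathbf{s}\in\mathbb{Z}^n\setminus\{\mathbf{0}\}$, $A\mathbf{s}=\mathbf{0}$, $\mathbf{c}^\top\mathbf{s}<0$, $\alpha$ is a positive integer with $\mathbf{x}+\alpha\mathbf{s}$ feasible, and $-\mathbf{c}^\top\mathbf{s}/\|\mathbf{s}\|_1\ge-\mathbf{c}^\top\mathbf{z}/\|\mathbf{z}\|_1$ for every $\mathbf{z}\in\mathbb{Z}^n\setminus\{\mathbf{0}\}$ with $A\mathbf{z}=\mathbf{0}$ and $\mathbf{x}+\mathbf{z}$ feasible. *)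

theory Defs
  imports "HOL-Analysis.Analysis"
begin

definition feasible :: "int ^ 'n ^ 'd \<Rightarrow> int ^ 'd \<Rightarrow> int ^ 'n \<Rightarrow> int ^ 'n \<Rightarrow> bool" where
  "feasible A b u x \<longleftrightarrow> A *v x = b \<and> (\<forall>i. 0 \<le> x $ i \<and> x $ i \<le> u $ i)"

definition l1norm :: "int ^ 'n \<Rightarrow> int" where
  "l1norm s = (\<Sum>i\<in>UNIV. \<bar>s $ i\<bar>)"

definition cdot :: "int ^ 'n \<Rightarrow> int ^ 'n \<Rightarrow> int" where
  "cdot c s = (\<Sum>i\<in>UNIV. c $ i * s $ i)"

definition descent_ratio :: "int ^ 'n \<Rightarrow> int ^ 'n \<Rightarrow> real" where
  "descent_ratio c s = - real_of_int (cdot c s) / real_of_int (l1norm s)"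

definition steepest_descent_aug ::
  "int ^ 'n ^ 'd \<Rightarrow> int ^ 'd \<Rightarrow> int ^ 'n \<Rightarrow> int ^ 'n \<Rightarrow> int ^ 'n \<Rightarrow> int \<Rightarrow> int ^ 'n \<Rightarrow> bool" where
  "steepest_descent_aug A b c u x \<alpha> s \<longleftrightarrow>
     s \<noteq> 0 \<and> A *v s = 0 \<and> cdot c s < 0 \<and> \<alpha> > 0 \<and>
     feasible A b u (x + of_int \<alpha> * s) \<and>
     (\<forall>z. z \<noteq> 0 \<and> A *v z = 0 \<and> feasible A b u (x + z) \<longrightarrow>
          descent_ratio c s \<ge> descent_ratio c z)"

end

theory Submission
  imports Defs
begin

(* Suppose the second direction t were strictly steeper than s.
   The two augmentations performed one after the other, z = alpha s + beta t,
   lead from x_k to the feasible point x_k + alpha s + beta t, so z is itself a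
   candidate direction at x_k and, by steepness of s, its descent ratio is at
   most that of s.  On the other hand the descent ratio of a positive
   combination of two improving directions is at least the mediant of their
   ratios: c^T is linear and the l1-norm is subadditive, so
   ratio(z) >= (alpha a + beta b) / (alpha p + beta q) > a / p = ratio(s),
   where a, b are the improvements and p, q the norms of s and t. *)

lemma of_int_vec_index: "(of_int a :: 'a::ring_1 ^ 'n) $ i = of_int a"
proof (cases a rule: int_cases)
  case (nonneg m)
  then show ?thesis by (simp add: of_nat_index)
next
  case (neg m)
  then have "(of_int a :: 'a ^ 'n) = - of_nat (Suc m)" by simp
  then show ?thesis using neg by (simp add: of_nat_index)
qed

lemma matrix_vector_mult_combination:
  "(A :: 'a::comm_ring_1 ^ 'n ^ 'd) *v (of_int a * s + of_int b * t)
     = of_int a * (A *v s) + of_int b * (A *v t)"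
  by (simp add: vec_eq_iff matrix_vector_mult_def of_int_vec_index
      sum.distrib sum_distrib_left algebra_simps)

lemma cdot_combination: "cdot c (of_int a * s + of_int b * t) = a * cdot c s + b * cdot c t"
  by (simp add: cdot_def of_int_vec_index sum.distrib sum_distrib_left algebra_simps)

lemma l1norm_combination_le:
  assumes "a \<ge> 0" "b \<ge> 0"
  shows "l1norm (of_int a * s + of_int b * t) \<le> a * l1norm s + b * l1norm t"
proof -
  have "\<bar>a * s $ i + b * t $ i\<bar> \<le> a * \<bar>s $ i\<bar> + b * \<bar>t $ i\<bar>" for i
    using assms by (metis abs_mult abs_of_nonneg abs_triangle_ineq)
  then show ?thesis unfolding l1norm_def
    by (simp add: of_int_vec_index sum_distrib_left sum.distrib[symmetric] sum_mono)
qed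

lemma l1norm_pos: "s \<noteq> 0 \<Longrightarrow> l1norm s > 0"
proof -
  assume "s \<noteq> 0"
  then obtain i where "s $ i \<noteq> 0" by (auto simp: vec_eq_iff)
  then have "0 < \<bar>s $ i\<bar>" by simp
  also have "\<dots> \<le> l1norm s" unfolding l1norm_def by (rule member_le_sum) auto
  finally show ?thesis .
qed

lemma mediant_gt:
  fixes a b p q \<alpha> \<beta> :: real
  assumes "p > 0" "q > 0" "\<alpha> > 0" "\<beta> > 0" and "a / p < b / q"
  shows "a / p < (\<alpha> * a + \<beta> * b) / (\<alpha> * p + \<beta> * q)"
proof -
  have "a * q < b * p" using assms by (simp add: divide_less_eq less_divide_eq mult.commute)
  then have "\<beta> * (a * q) < \<beta> * (b * p)" using \<open>\<beta> > 0\<close> by simp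
  then have "a * (\<alpha> * p + \<beta> * q) < (\<alpha> * a + \<beta> * b) * p" by (simp add: algebra_simps)
  moreover have "\<alpha> * p + \<beta> * q > 0" using assms by (simp add: add_pos_pos)
  ultimately show ?thesis using \<open>p > 0\<close> by (simp add: divide_less_eq less_divide_eq)
qed

text \<open>If t is strictly steeper than a non-worsening direction s, then every
  positive combination of s and t is strictly steeper than s; by
  subadditivity of the norm its ratio is at least the mediant of the two ratios.\<close>

lemma descent_ratio_combination_gt:
  fixes c s t :: "int ^ 'n" and \<alpha> \<beta> :: int
  assumes "\<alpha> > 0" "\<beta> > 0" "s \<noteq> 0" "t \<noteq> 0" "cdot c s \<le> 0"
    and steeper: "descent_ratio c s < descent_ratio c t"
  shows "descent_ratio c s < descent_ratio c (of_int \<alpha> * s + of_int \<beta> * t)"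
proof -
  define z where "z = of_int \<alpha> * s + of_int \<beta> * t"
  define a where "a = real_of_int (- cdot c s)"
  define b where "b = real_of_int (- cdot c t)"
  define p where "p = real_of_int (l1norm s)"
  define q where "q = real_of_int (l1norm t)"
  have pos: "p > 0" "q > 0" using assms l1norm_pos by (auto simp: p_def q_def)
  have ratio_s: "descent_ratio c s = a / p" by (simp add: descent_ratio_def a_def p_def)
  have ratio_t: "descent_ratio c t = b / q" by (simp add: descent_ratio_def b_def q_def)
  have "a \<ge> 0" using \<open>cdot c s \<le> 0\<close> by (simp add: a_def)
  then have "b / q > 0" using steeper pos ratio_s ratio_t by (smt (verit) divide_nonneg_pos)
  then have "b > 0" using pos by (simp add: zero_less_divide_iff)
  define N where "N = \<alpha> * a + \<beta> * b"
  have "N > 0" using \<open>a \<ge> 0\<close> \<open>b > 0\<close> assms by (simp add: N_def add_nonneg_pos)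
  have objective_z: "real_of_int (cdot c z) = - N"
    unfolding z_def cdot_combination by (simp add: N_def a_def b_def)
  then have ratio_z: "descent_ratio c z = N / real_of_int (l1norm z)"
    by (simp add: descent_ratio_def)
  have "cdot c z < 0" using objective_z \<open>N > 0\<close> by linarith
  then have "z \<noteq> 0" by (auto simp: cdot_def)
  then have norm_z_pos: "real_of_int (l1norm z) > 0" using l1norm_pos by simp
  have "real_of_int (l1norm z) \<le> \<alpha> * p + \<beta> * q"
    using l1norm_combination_le[of \<alpha> \<beta> s t] assms unfolding z_def p_def q_def
    by (metis less_imp_le of_int_add of_int_le_iff of_int_mult)
  then have "N / (\<alpha> * p + \<beta> * q) \<le> N / real_of_int (l1norm z)"
    using \<open>N > 0\<close> norm_z_pos by (intro frac_le) auto
  moreover have "a / p < N / (\<alpha> * p + \<beta> * q)"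
    unfolding N_def using mediant_gt pos assms steeper ratio_s ratio_t by simp
  ultimately have "descent_ratio c s < descent_ratio c z" unfolding ratio_s ratio_z by linarith
  then show ?thesis by (simp add: z_def)
qed

lemma consecutive_augmentations_candidate:
  assumes S: "steepest_descent_aug A b c u x \<alpha> s"
    and T: "steepest_descent_aug A b c u (x + of_int \<alpha> * s) \<beta> t"
  defines "z \<equiv> of_int \<alpha> * s + of_int \<beta> * t"
  shows "z \<noteq> 0" "A *v z = 0" "feasible A b u (x + z)"
proof -
  have "cdot c z < 0"
    using S T unfolding z_def cdot_combination steepest_descent_aug_def
    by (smt (verit) mult_pos_neg)
  then show "z \<noteq> 0" by (auto simp: cdot_def)
  show "A *v z = 0"
    using S T unfolding z_def matrix_vector_mult_combination steepest_descent_aug_def by simp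
  show "feasible A b u (x + z)"
    using T unfolding z_def steepest_descent_aug_def by (simp add: add.assoc)
qed

theorem lemma4:
  fixes A :: "int ^ 'n ^ 'd" and b :: "int ^ 'd" and c u xk s t :: "int ^ 'n"
    and \<alpha> \<beta> :: int
  assumes "\<forall>i. 0 \<le> u $ i"
    and "feasible A b u xk"
    and "steepest_descent_aug A b c u xk \<alpha> s"
    and "steepest_descent_aug A b c u (xk + of_int \<alpha> * s) \<beta> t"
  shows "descent_ratio c s \<ge> descent_ratio c t"
proof (rule ccontr)
  assume "\<not> ?thesis"
  then have steeper: "descent_ratio c s < descent_ratio c t" by simp
  note S = assms(3)[unfolded steepest_descent_aug_def]
  note T = assms(4)[unfolded steepest_descent_aug_def]
  define z where "z = of_int \<alpha> * s + of_int \<beta> * t"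
  have "z \<noteq> 0 \<and> A *v z = 0 \<and> feasible A b u (xk + z)"
    using consecutive_augmentations_candidate[OF assms(3,4)] by (simp add: z_def)
  then have "descent_ratio c z \<le> descent_ratio c s" using S by blast
  moreover have "descent_ratio c s < descent_ratio c z"
    unfolding z_def using S T steeper by (intro descent_ratio_combination_gt) auto
  ultimately show False by simp
qed

end
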